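(* For every integer $n\ge 3$, $$d_3(n)=\begin{cases} n+\tfrac13 n & \text{if } n\equiv 0 \pmod 6,\\ n-\tfrac16 (n-1) & \text{if } n\equiv 1 \pmod 6,\\ n+\tfrac13 (n-2) & \text{if } n\equiv 2 \pmod 6,\\ n-\tfrac13 n & \text{if } n\equiv 3 \pmod 6,\\ n+\tfrac13 (n+2) & \text{if } n\equiv 4 \pmod 6,\\ n-\tfrac16 (n+1) & \text{if } n\equiv 5 \pmod 6.\end{cases}$$
   Context: A Mondrian partition of an $n\times n$ square ($n$ a positive integer) is a dissection of the square into $k\ge 2$ non-overlapping rectangles with positive integer side lengths which are pairwise non-congruent (rectangles of dimensions $a\times b$ and $b\times a$ count as congruent). Its defect is the difference between the largest and the smallest area among its rectangles. For $k\ge 2$, $d_k(n)$ denotes the minimum defect over all Mondrian partitions of the $n\times n$ square using exactly $k$ rectangles. *)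

theory Defs
  imports Main
begin

text \<open>A rectangle with integer corners inside the n x n square is encoded as
  (x, y, w, h): lower-left corner (x,y), width w, height h.\<close>
type_synonym rect = "nat \<times> nat \<times> nat \<times> nat"

fun rwidth :: "rect \<Rightarrow> nat" where "rwidth (x, y, w, h) = w"
fun rheight :: "rect \<Rightarrow> nat" where "rheight (x, y, w, h) = h"
fun rarea :: "rect \<Rightarrow> nat" where "rarea (x, y, w, h) = w * h"

text \<open>unit cell [i,i+1] x [j,j+1] lies in the rectangle\<close>
fun covers :: "rect \<Rightarrow> nat \<Rightarrow> nat \<Rightarrow> bool" where
  "covers (x, y, w, h) i j \<longleftrightarrow> x \<le> i \<and> i < x + w \<and> y \<le> j \<and> j < y + h"

fun inside :: "nat \<Rightarrow> rect \<Rightarrow> bool" where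
  "inside n (x, y, w, h) \<longleftrightarrow> 0 < w \<and> 0 < h \<and> x + w \<le> n \<and> y + h \<le> n"

definition congruent :: "rect \<Rightarrow> rect \<Rightarrow> bool" where
  "congruent r s \<longleftrightarrow> {rwidth r, rheight r} = {rwidth s, rheight s}"

definition mondrian :: "nat \<Rightarrow> nat \<Rightarrow> rect set \<Rightarrow> bool" where
  "mondrian n k P \<longleftrightarrow> finite P \<and> card P = k \<and> k \<ge> 2 \<and>
     (\<forall>r\<in>P. inside n r) \<and>
     (\<forall>i<n. \<forall>j<n. \<exists>!r. r \<in> P \<and> covers r i j) \<and>
     (\<forall>r\<in>P. \<forall>s\<in>P. r \<noteq> s \<longrightarrow> \<not> congruent r s)"

definition defect :: "rect set \<Rightarrow> nat" where
  "defect P = Max (rarea ` P) - Min (rarea ` P)"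

definition d :: "nat \<Rightarrow> nat \<Rightarrow> nat" where
  "d k n = (LEAST v. \<exists>P. mondrian n k P \<and> v = defect P)"

end

theory Submission
  imports Defs
begin

text \<open>
  The rectangle of a three-piece Mondrian partition that contains a corner cell is either a
  full-length strip along an edge, or else one of the other two rectangles contains two of the
  remaining three corner cells; these cannot be opposite corners, so that rectangle is a full-length
  strip along an edge.
  Up to transposition the other two rectangles tile the complementary (n - w) x n rectangle, either
  as two further parallel strips, giving defect at least 2n, or as two stacked rectangles of width
  c = n - w and heights b and n - b.  In the latter "L-shape" the areas differ by c t and by
  (c t +- n u) / 2, where t = n - 2b has the parity of n and u = 2n - 3c is congruent to 2n modulo 3;
  a case analysis on n mod 6 and on the small values of u yields the lower bound, which the L-shape
  with w = (n + 1) div 3 and b = (n - 1) div 2 attains.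
\<close>

definition d3_formula :: "nat \<Rightarrow> nat" where
  "d3_formula n =
    (if n mod 6 = 0 then n + n div 3
     else if n mod 6 = 1 then n - (n - 1) div 6
     else if n mod 6 = 2 then n + (n - 2) div 3
     else if n mod 6 = 3 then n - n div 3
     else if n mod 6 = 4 then n + (n + 2) div 3
     else n - (n + 1) div 6)"

text \<open>Residues 3..8 rather than 0..5 keep every case free of truncated subtraction.\<close>

lemma nat_ge_3_mod_6_cases:
  fixes n :: nat
  assumes "3 \<le> n"
  obtains p where "n = 6 * p + 3" | p where "n = 6 * p + 4" | p where "n = 6 * p + 5"
    | p where "n = 6 * p + 6" | p where "n = 6 * p + 7" | p where "n = 6 * p + 8"
proof -
  define p where "p = (n - 3) div 6"
  define m where "m = (n - 3) mod 6"
  have "n = 6 * p + 3 + m" using assms unfolding p_def m_def by simp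
  moreover have "m = 0 \<or> m = 1 \<or> m = 2 \<or> m = 3 \<or> m = 4 \<or> m = 5" unfolding m_def by linarith
  ultimately show ?thesis using that by auto
qed

lemma d3_formula_simps [simp]:
  "d3_formula (6 * p + 3) = 4 * p + 2"
  "d3_formula (6 * p + 4) = 8 * p + 6"
  "d3_formula (6 * p + 5) = 5 * p + 4"
  "d3_formula (6 * p + 6) = 8 * p + 8"
  "d3_formula (6 * p + 7) = 5 * p + 6"
  "d3_formula (6 * p + 8) = 8 * p + 10"
  by (simp_all add: d3_formula_def)

lemma two_d3_formula_le:
  assumes "3 \<le> n"
  shows "2 * d3_formula n \<le> 3 * n"
  using assms by (cases rule: nat_ge_3_mod_6_cases) simp_all

lemma d3_formula_le_L_shape_bound_balanced:
  fixes n c :: nat and u P D :: int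
  assumes n: "3 \<le> n" and u: "3 * int c = 2 * int n - u" "\<bar>u\<bar> < 3"
    and P_ge: "int c \<le> P" and P_ge2: "even n \<Longrightarrow> 2 * int c \<le> P"
    and D: "P \<le> D" "P + int n * \<bar>u\<bar> \<le> 2 * D"
  shows "int (d3_formula n) \<le> D"
  using n
proof (cases rule: nat_ge_3_mod_6_cases)
  case (1 p)
  then have "u = 0" using u by presburger
  then show ?thesis using 1 D P_ge u by simp
next
  case (2 p)
  then have "u = -1 \<or> u = 2" using u by presburger
  then show ?thesis using 2 D P_ge2 u by (elim disjE) simp_all
next
  case (3 p)
  then have "u = 1 \<or> u = -2" using u by presburger
  then show ?thesis using 3 D P_ge u by (elim disjE) simp_all
next
  case (4 p)
  then have "u = 0" using u by presburger
  then show ?thesis using 4 D P_ge2 u by simp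
next
  case (5 p)
  then have "u = -1 \<or> u = 2" using u by presburger
  then show ?thesis using 5 D P_ge u by (elim disjE) simp_all
next
  case (6 p)
  then have "u = 1 \<or> u = -2" using u by presburger
  then show ?thesis using 6 D P_ge2 u by (elim disjE) simp_all
qed

lemma d3_formula_le_L_shape_bound:
  fixes n c t :: nat and D :: int
  assumes n: "3 \<le> n" and t: "1 \<le> t" "even (n + t)"
    and D1: "int (c * t) \<le> D"
    and D2: "int (c * t) + int n * \<bar>2 * int n - 3 * int c\<bar> \<le> 2 * D"
  shows "int (d3_formula n) \<le> D"
proof -
  define P where "P = int (c * t)"
  define u where "u = 2 * int n - 3 * int c"
  have "c \<le> c * t" using t by simp
  then have P_ge: "int c \<le> P" unfolding P_def by (rule of_nat_mono)
  have P_ge2: "2 * int c \<le> P" if "even n"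
  proof -
    have "2 \<le> t" using t that by presburger
    then have "c * 2 \<le> c * t" by (rule mult_le_mono2)
    then show ?thesis unfolding P_def by (metis mult.commute of_nat_le_iff of_nat_mult of_nat_numeral)
  qed
  have D: "P \<le> D" "P + int n * \<bar>u\<bar> \<le> 2 * D" using D1 D2 unfolding P_def u_def .
  show ?thesis
  proof (cases "3 \<le> \<bar>u\<bar>")
    case True
    then have "int n * 3 \<le> int n * \<bar>u\<bar>" by (simp add: mult_left_mono)
    then show ?thesis using D P_ge two_d3_formula_le[OF n] by linarith
  next
    case False
    have "3 * int c = 2 * int n - u" unfolding u_def by simp
    with False show ?thesis using d3_formula_le_L_shape_bound_balanced[OF n _ _ P_ge P_ge2 D] by simp
  qed
qed

lemma int_diff_le_Max_minus_Min:
  fixes S :: "nat set"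
  assumes "finite S" "x \<in> S" "y \<in> S"
  shows "int x - int y \<le> int (Max S - Min S)"
proof -
  have "x \<le> Max S" "Min S \<le> y" "y \<le> Max S" using assms by simp_all
  then show ?thesis by (simp add: of_nat_diff)
qed

lemma d3_formula_le_L_shape_defect:
  fixes a b c n :: nat
  assumes n: "a + c = n" "3 \<le> n" and b: "b < n" "2 * b \<noteq> n"
  shows "d3_formula n \<le> Max {a * n, c * b, c * (n - b)} - Min {a * n, c * b, c * (n - b)}"
proof -
  have main: "d3_formula n \<le> Max {a * n, c * b, c * (n - b)} - Min {a * n, c * b, c * (n - b)}"
    if small: "2 * b < n" for b
  proof -
    define S where "S = {a * n, c * b, c * (n - b)}"
    define D where "D = int (Max S - Min S)"
    define t where "t = n - 2 * b"
    define u where "u = 2 * int n - 3 * int c"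
    have "finite S" unfolding S_def by simp
    then have diff: "int x - int y \<le> D" if "x \<in> S" "y \<in> S" for x y
      using int_diff_le_Max_minus_Min that unfolding D_def by blast
    have casts: "int a = int n - int c" "int (n - b) = int n - int b" "int t = int n - 2 * int b"
      using n small unfolding t_def by auto
    have areas: "int (c * (n - b)) - int (c * b) = int (c * t)"
      "2 * (int (a * n) - int (c * b)) = int (c * t) + int n * u"
      "2 * (int (c * (n - b)) - int (a * n)) = int (c * t) - int n * u"
      unfolding u_def of_nat_mult casts by (simp_all add: algebra_simps)
    have D1: "int (c * t) \<le> D" using diff[of "c * (n - b)" "c * b"] areas(1) unfolding S_def by simp
    have D2: "int (c * t) + int n * \<bar>u\<bar> \<le> 2 * D"
      using diff[of "a * n" "c * b"] diff[of "c * (n - b)" "a * n"] areas(2,3)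
      unfolding S_def by (cases "0 \<le> u") (simp_all add: abs_if)
    have "1 \<le> t" "even (n + t)" using small unfolding t_def by auto
    from d3_formula_le_L_shape_bound[OF n(2) this D1 D2[unfolded u_def]]
    have "int (d3_formula n) \<le> D" .
    then show ?thesis unfolding D_def S_def of_nat_le_iff .
  qed
  show ?thesis
  proof (cases "2 * b < n")
    case False
    then have "2 * (n - b) < n" and nb: "n - (n - b) = b" using b by auto
    from main[OF this(1)] show ?thesis unfolding nb by (simp add: insert_commute)
  qed (rule main)
qed

lemma two_mul_le_Max_minus_Min:
  fixes a b c n :: nat
  assumes "a \<noteq> b" "a \<noteq> c" "b \<noteq> c"
  shows "2 * n \<le> Max {a * n, b * n, c * n} - Min {a * n, b * n, c * n}"
proof -
  define x where "x = max a (max b c)"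
  define y where "y = min a (min b c)"
  have "y + 2 \<le> x" using assms unfolding x_def y_def by linarith
  then have "y * n + 2 * n \<le> x * n" by (metis add_mult_distrib mult.commute mult_le_mono1)
  moreover have "Max {a * n, b * n, c * n} = x * n" "Min {a * n, b * n, c * n} = y * n"
    unfolding x_def y_def by (simp_all add: nat_mult_max_left nat_mult_min_left)
  ultimately show ?thesis by simp
qed

lemma rarea_eq: "rarea r = rwidth r * rheight r"
  by (cases r) simp

lemma mondrian_inside: "mondrian n k P \<Longrightarrow> r \<in> P \<Longrightarrow> inside n r"
  unfolding mondrian_def by blast

lemma mondrian_covers_ex: "mondrian n k P \<Longrightarrow> i < n \<Longrightarrow> j < n \<Longrightarrow> \<exists>r\<in>P. covers r i j"
  unfolding mondrian_def by blast

lemma inside_pos: "inside n r \<Longrightarrow> 0 < rwidth r \<and> 0 < rheight r"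
  by (cases r) simp

lemma inside_covers_bounded: "inside n r \<Longrightarrow> covers r i j \<Longrightarrow> i < n \<and> j < n"
  by (cases r) auto

lemma mondrian_covers_disjoint:
  assumes "mondrian n k P" "r \<in> P" "s \<in> P" "r \<noteq> s" "covers r i j"
  shows "\<not> covers s i j"
  using assms inside_covers_bounded[OF mondrian_inside[OF assms(1,2)] assms(5)]
  unfolding mondrian_def by blast

lemma mondrian_pos:
  assumes "mondrian n k P"
  shows "0 < n"
proof -
  have "card P \<ge> 2" using assms unfolding mondrian_def by blast
  then obtain r where "r \<in> P" by (metis card.empty ex_in_conv not_numeral_le_zero)
  then show ?thesis using mondrian_inside[OF assms] by (cases r) fastforce
qed

lemma mondrian_not_congruent:
  "mondrian n k P \<Longrightarrow> r \<in> P \<Longrightarrow> s \<in> P \<Longrightarrow> r \<noteq> s \<Longrightarrow> \<not> congruent r s"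
  unfolding mondrian_def by blast

fun subrect :: "rect \<Rightarrow> rect \<Rightarrow> bool" where
  "subrect (x, y, w, h) (x', y', w', h') \<longleftrightarrow>
     0 < w \<and> 0 < h \<and> x' \<le> x \<and> x + w \<le> x' + w' \<and> y' \<le> y \<and> y + h \<le> y' + h'"

lemma subrect_iff_covers:
  assumes "0 < rwidth r" "0 < rheight r"
  shows "subrect r Q \<longleftrightarrow> (\<forall>i j. covers r i j \<longrightarrow> covers Q i j)"
proof -
  obtain x y w h where r: "r = (x, y, w, h)" by (cases r)
  obtain x' y' w' h' where Q: "Q = (x', y', w', h')" by (cases Q)
  show ?thesis
  proof
    assume cov: "\<forall>i j. covers r i j \<longrightarrow> covers Q i j"
    have "covers Q x y" "covers Q (x + w - 1) (y + h - 1)"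
      using assms by (auto simp: r intro!: cov[rule_format])
    then show "subrect r Q" using assms unfolding r Q by auto
  qed (auto simp: r Q)
qed

lemma two_rectangles_tiling_corner:
  assumes B: "subrect B (x0, y0, W, H)" and C: "subrect C (x0, y0, W, H)"
    and tile: "\<And>i j. covers (x0, y0, W, H) i j \<Longrightarrow> covers B i j \<noteq> covers C i j"
    and corner: "covers B x0 y0"
  shows "rwidth B = W \<and> rwidth C = W \<and> rheight B + rheight C = H
    \<or> rheight B = H \<and> rheight C = H \<and> rwidth B + rwidth C = W"
proof -
  obtain wb hb where Bxy: "B = (x0, y0, wb, hb)" using B corner by (cases B) auto
  obtain xc yc wc hc where Cxy: "C = (xc, yc, wc, hc)" by (cases C)
  have pos: "0 < wb" "0 < hb" "0 < wc" "0 < hc" using B C unfolding Bxy Cxy by auto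
  have Bfit: "wb \<le> W" "hb \<le> H" using B unfolding Bxy by auto
  have Cfit: "x0 \<le> xc" "xc + wc \<le> x0 + W" "y0 \<le> yc" "yc + hc \<le> y0 + H" using C unfolding Cxy by auto
  have inC: "covers C i j" if "covers (x0, y0, W, H) i j" "\<not> covers B i j" for i j
    using tile[OF that(1)] that(2) by blast
  have C_corner_not_B: "\<not> covers B xc yc"
    using tile[of xc yc] pos Cfit unfolding Cxy by auto
  have top_right: "covers C (x0 + W - 1) (y0 + H - 1)" if "wb < W \<or> hb < H"
    using that pos Bfit by (intro inC) (auto simp: Bxy)
  consider "wb = W" "hb = H" | "wb < W" "hb < H" | "wb = W" "hb < H" | "wb < W" "hb = H"
    using Bfit by linarith
  then show ?thesis
  proof cases
    case 1
    then show ?thesis using C_corner_not_B Cfit pos unfolding Bxy by auto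
  next
    case 2
    have "covers C (x0 + wb) y0" "covers C x0 (y0 + hb)"
      using inC[of "x0 + wb" y0] inC[of x0 "y0 + hb"] 2 pos unfolding Bxy by auto
    then have "covers C x0 y0" unfolding Cxy by auto
    then show ?thesis using tile[of x0 y0] corner pos 2 by auto
  next
    case 3
    have "covers C x0 (y0 + hb)" using inC[of x0 "y0 + hb"] 3 pos unfolding Bxy by auto
    then have "xc = x0" "wc = W" "yc + hc = y0 + H" "yc \<le> y0 + hb"
      using top_right 3 Cfit unfolding Cxy by auto
    moreover have "y0 + hb \<le> yc" using C_corner_not_B 3 Cfit pos \<open>xc = x0\<close> unfolding Bxy by auto
    ultimately show ?thesis using 3 unfolding Bxy Cxy by auto
  next
    case 4
    have "covers C (x0 + wb) y0" using inC[of "x0 + wb" y0] 4 pos unfolding Bxy by auto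
    then have "yc = y0" "hc = H" "xc + wc = x0 + W" "xc \<le> x0 + wb"
      using top_right 4 Cfit unfolding Cxy by auto
    moreover have "x0 + wb \<le> xc" using C_corner_not_B 4 Cfit pos \<open>yc = y0\<close> unfolding Bxy by auto
    ultimately show ?thesis using 4 unfolding Bxy Cxy by auto
  qed
qed

lemma two_rectangles_tiling:
  assumes B: "subrect B (x0, y0, W, H)" and C: "subrect C (x0, y0, W, H)"
    and tile: "\<And>i j. covers (x0, y0, W, H) i j \<Longrightarrow> covers B i j \<noteq> covers C i j"
  shows "rwidth B = W \<and> rwidth C = W \<and> rheight B + rheight C = H
    \<or> rheight B = H \<and> rheight C = H \<and> rwidth B + rwidth C = W"
proof -
  have "covers (x0, y0, W, H) x0 y0" using B by (cases B) auto
  then consider "covers B x0 y0" | "covers C x0 y0" using tile by blast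
  then show ?thesis
  proof cases
    case 1
    then show ?thesis using two_rectangles_tiling_corner[OF B C tile] by blast
  next
    case 2
    then show ?thesis using two_rectangles_tiling_corner[OF C B] tile by fastforce
  qed
qed

fun transpose_rect :: "rect \<Rightarrow> rect" where
  "transpose_rect (x, y, w, h) = (y, x, h, w)"

lemma transpose_rect_transpose_rect [simp]: "transpose_rect (transpose_rect r) = r"
  by (cases r) simp

lemma covers_transpose_rect [simp]: "covers (transpose_rect r) i j \<longleftrightarrow> covers r j i"
  by (cases r) auto

lemma rarea_transpose_rect [simp]: "rarea (transpose_rect r) = rarea r"
  by (cases r) simp

lemma congruent_transpose_rect [simp]:
  "congruent (transpose_rect r) (transpose_rect s) \<longleftrightarrow> congruent r s"
  by (cases r; cases s) (auto simp: congruent_def insert_commute)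

lemma mondrian_transpose:
  assumes "mondrian n k P"
  shows "mondrian n k (transpose_rect ` P)"
proof -
  have inj: "inj transpose_rect" by (metis injI transpose_rect_transpose_rect)
  have "\<exists>!r. r \<in> transpose_rect ` P \<and> covers r i j" if "i < n" "j < n" for i j
  proof -
    from assms that have "\<exists>!s. s \<in> P \<and> covers s j i" unfolding mondrian_def by blast
    then obtain s where s: "s \<in> P" "covers s j i"
      and unique: "\<And>s'. s' \<in> P \<Longrightarrow> covers s' j i \<Longrightarrow> s' = s"
      by blast
    show ?thesis
    proof (rule ex1I[of _ "transpose_rect s"])
      fix r assume "r \<in> transpose_rect ` P \<and> covers r i j"
      then obtain s' where "s' \<in> P" "covers s' j i" "r = transpose_rect s'" by auto
      then show "r = transpose_rect s" using unique by simp
    qed (use s in simp)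
  qed
  moreover have "card (transpose_rect ` P) = card P"
    using inj by (simp add: card_image inj_on_subset)
  moreover have "\<not> congruent r s" if "r \<in> transpose_rect ` P" "s \<in> transpose_rect ` P" "r \<noteq> s" for r s
  proof -
    from that obtain r0 s0 where "r0 \<in> P" "s0 \<in> P" "r0 \<noteq> s0"
      and "r = transpose_rect r0" "s = transpose_rect s0" by blast
    then show ?thesis using assms unfolding mondrian_def by (simp del: transpose_rect.simps)
  qed
  ultimately show ?thesis using assms unfolding mondrian_def by auto
qed

lemma defect_transpose: "defect (transpose_rect ` P) = defect P"
  unfolding defect_def image_image by simp

lemma mondrian3_vertical_edge_strip_shape:
  assumes P: "mondrian n 3 P" and strip: "(x, 0, w, n) \<in> P" and edge: "x = 0 \<or> x + w = n"
  obtains B C where "P = {(x, 0, w, n), B, C}" "B \<noteq> (x, 0, w, n)" "C \<noteq> (x, 0, w, n)" "B \<noteq> C"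
    and "w < n"
    and "rwidth B = n - w \<and> rwidth C = n - w \<and> rheight B + rheight C = n
      \<or> rheight B = n \<and> rheight C = n \<and> rwidth B + rwidth C = n - w"
proof -
  define R :: rect where "R = (x, 0, w, n)"
  have "card (P - {R}) = 2" using P strip unfolding mondrian_def R_def by simp
  then obtain B C where BC: "P - {R} = {B, C}" "B \<noteq> C" by (auto simp: card_2_iff)
  have P_eq: "P = {R, B, C}" and RBC: "B \<noteq> R" "C \<noteq> R"
    using BC strip unfolding R_def by blast+
  note ins = mondrian_inside[OF P] and disjoint = mondrian_covers_disjoint[OF P]
  have "w < n"
  proof (rule ccontr)
    assume "\<not> w < n"
    obtain xb yb wb hb where "B = (xb, yb, wb, hb)" by (cases B)
    then have "covers B xb yb" "covers R xb yb"
      using ins[of B] ins[of R] \<open>\<not> w < n\<close> P_eq unfolding R_def by auto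
    then show False using disjoint[of B R] P_eq RBC by auto
  qed
  define x0 where "x0 = (if x = 0 then w else 0)"
  have Q: "covers (x0, 0, n - w, n) i j \<longleftrightarrow> i < n \<and> j < n \<and> \<not> covers R i j" for i j
    using edge \<open>w < n\<close> unfolding x0_def R_def by auto
  have sub: "subrect r (x0, 0, n - w, n)" if "r \<in> {B, C}" for r
  proof -
    have r: "r \<in> P" "r \<noteq> R" using that P_eq RBC by auto
    have "covers (x0, 0, n - w, n) i j" if "covers r i j" for i j
      using Q inside_covers_bounded[OF ins[OF r(1)] that] disjoint[OF r(1) _ r(2) that] P_eq by auto
    then show ?thesis using inside_pos[OF ins[OF r(1)]] by (simp add: subrect_iff_covers)
  qed
  have "covers B i j \<noteq> covers C i j" if "covers (x0, 0, n - w, n) i j" for i j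
    using mondrian_covers_ex[OF P, of i j] disjoint[of B C i j] that Q P_eq BC(2) by auto
  from two_rectangles_tiling[OF sub[of B] sub[of C] this] show ?thesis
    using that P_eq RBC BC(2) \<open>w < n\<close> unfolding R_def by auto
qed

lemma d3_formula_le_defect_vertical_edge_strip:
  assumes P: "mondrian n 3 P" and strip: "(x, 0, w, n) \<in> P" and edge: "x = 0 \<or> x + w = n"
    and n: "3 \<le> n"
  shows "d3_formula n \<le> defect P"
proof -
  obtain B C where P_eq: "P = {(x, 0, w, n), B, C}" "B \<noteq> (x, 0, w, n)" "C \<noteq> (x, 0, w, n)" "B \<noteq> C"
    and "w < n"
    and shape: "rwidth B = n - w \<and> rwidth C = n - w \<and> rheight B + rheight C = n
      \<or> rheight B = n \<and> rheight C = n \<and> rwidth B + rwidth C = n - w"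
    using mondrian3_vertical_edge_strip_shape[OF P strip edge] .
  have nc: "\<not> congruent (x, 0, w, n) B" "\<not> congruent (x, 0, w, n) C" "\<not> congruent B C"
    using mondrian_not_congruent[OF P] P_eq by auto
  have defect_eq: "defect P = Max {w * n, rarea B, rarea C} - Min {w * n, rarea B, rarea C}"
    unfolding defect_def P_eq(1) by simp
  from shape show ?thesis
  proof (elim disjE conjE)
    assume widths: "rwidth B = n - w" "rwidth C = n - w" and heights: "rheight B + rheight C = n"
    have "rheight B \<noteq> rheight C" using nc(3) widths unfolding congruent_def by auto
    moreover have "0 < rheight C" using mondrian_inside[OF P, of C] P_eq by (cases C) auto
    ultimately have "rheight B < n" "2 * rheight B \<noteq> n" and hC: "rheight C = n - rheight B"
      using heights by auto
    from d3_formula_le_L_shape_defect[OF _ n this(1,2), of w "n - w"]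
    show ?thesis unfolding defect_eq rarea_eq hC using widths \<open>w < n\<close> by (simp add: mult.commute)
  next
    assume heights: "rheight B = n" "rheight C = n"
    have "w \<noteq> rwidth B" "w \<noteq> rwidth C" "rwidth B \<noteq> rwidth C"
      using nc heights unfolding congruent_def by auto
    from two_mul_le_Max_minus_Min[OF this, of n]
    show ?thesis unfolding defect_eq rarea_eq using heights two_d3_formula_le[OF n] by simp
  qed
qed

lemma inside_right_edge_strip:
  assumes "inside n r" "covers r (n - 1) 0" "covers r (n - 1) (n - 1)"
  shows "\<exists>x w. r = (x, 0, w, n) \<and> x + w = n"
  using assms by (cases r) auto

lemma inside_top_edge_strip:
  assumes "inside n r" "covers r 0 (n - 1)" "covers r (n - 1) (n - 1)"
  shows "\<exists>y h. r = (0, y, n, h) \<and> y + h = n"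
  using assms by (cases r) auto

lemma mondrian3_edge_strip:
  assumes P: "mondrian n 3 P"
  shows "(\<exists>x w. (x, 0, w, n) \<in> P \<and> (x = 0 \<or> x + w = n))
    \<or> (\<exists>y h. (0, y, n, h) \<in> P \<and> (y = 0 \<or> y + h = n))"
proof -
  note ins = mondrian_inside[OF P] and tiled = mondrian_covers_ex[OF P]
  have "0 < n" using mondrian_pos[OF P] .
  then obtain A where A: "A \<in> P" "covers A 0 0" using tiled by blast
  then obtain wa ha where A_eq: "A = (0, 0, wa, ha)" by (cases A) auto
  have "wa \<le> n" "ha \<le> n" using ins[OF A(1)] unfolding A_eq by auto
  then consider "ha = n" | "wa = n" | "wa < n" "ha < n" by linarith
  then show ?thesis
  proof cases
    case 1
    then show ?thesis using A(1) unfolding A_eq by blast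
  next
    case 2
    then show ?thesis using A(1) unfolding A_eq by blast
  next
    case 3
    define m where "m = n - 1"
    have "card (P - {A}) = 2" using P A(1) unfolding mondrian_def by simp
    then obtain B C where BC: "P - {A} = {B, C}" by (auto simp: card_2_iff)
    have off_A: "\<exists>r\<in>{B, C}. covers r i j" if "i < n" "j < n" "\<not> covers A i j" for i j
      using tiled[OF that(1,2)] that(3) BC by blast
    have corners: "covers B m 0 \<or> covers C m 0" "covers B 0 m \<or> covers C 0 m"
      "covers B m m \<or> covers C m m"
    proof -
      have "m < n" "\<not> covers A m 0" "\<not> covers A 0 m" "\<not> covers A m m"
        using 3 \<open>0 < n\<close> unfolding m_def A_eq by auto
      then show "covers B m 0 \<or> covers C m 0" "covers B 0 m \<or> covers C 0 m" "covers B m m \<or> covers C m m"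
        using off_A \<open>0 < n\<close> by blast+
    qed
    have not_diagonal: "\<not> (covers r m 0 \<and> covers r 0 m)" if "r \<in> {B, C}" for r
    proof
      assume "covers r m 0 \<and> covers r 0 m"
      then have "covers r 0 0" by (cases r) auto
      moreover have "r \<in> P" "r \<noteq> A" using that BC by auto
      ultimately show False using mondrian_covers_disjoint[OF P A(1)] A(2) by blast
    qed
    obtain r where "r \<in> P" and "covers r m 0 \<and> covers r m m \<or> covers r 0 m \<and> covers r m m"
      using corners not_diagonal BC by blast
    then show ?thesis
      using inside_right_edge_strip[OF ins] inside_top_edge_strip[OF ins] unfolding m_def by blast
  qed
qed

lemma d3_formula_le_defect:
  assumes P: "mondrian n 3 P" and n: "3 \<le> n"
  shows "d3_formula n \<le> defect P"
  using mondrian3_edge_strip[OF P]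
proof
  assume "\<exists>x w. (x, 0, w, n) \<in> P \<and> (x = 0 \<or> x + w = n)"
  then show ?thesis using d3_formula_le_defect_vertical_edge_strip[OF P _ _ n] by blast
next
  assume "\<exists>y h. (0, y, n, h) \<in> P \<and> (y = 0 \<or> y + h = n)"
  then obtain y h where "(0, y, n, h) \<in> P" and edge: "y = 0 \<or> y + h = n" by blast
  then have "(y, 0, h, n) \<in> transpose_rect ` P" by force
  from d3_formula_le_defect_vertical_edge_strip[OF mondrian_transpose[OF P] this edge n]
  show ?thesis by (simp add: defect_transpose)
qed

lemma mondrian_L_shape:
  assumes "0 < a" "a < n" "0 < b" "b < n" "2 * b \<noteq> n"
  shows "mondrian n 3 {(0, 0, a, n), (a, 0, n - a, b), (a, b, n - a, n - b)}"
    (is "mondrian n 3 ?P")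
proof -
  have "card ?P = 3" using assms by auto
  moreover have "\<exists>!r. r \<in> ?P \<and> covers r i j" if "i < n" "j < n" for i j
  proof (cases "i < a")
    case True
    then show ?thesis using that assms by (intro ex1I[of _ "(0, 0, a, n)"]) auto
  next
    case False
    then show ?thesis
    proof (cases "j < b")
      case True
      then show ?thesis using that assms False by (intro ex1I[of _ "(a, 0, n - a, b)"]) auto
    next
      case False
      then show ?thesis using that assms \<open>\<not> i < a\<close> by (intro ex1I[of _ "(a, b, n - a, n - b)"]) auto
    qed
  qed
  moreover have "\<forall>r\<in>?P. \<forall>s\<in>?P. r \<noteq> s \<longrightarrow> \<not> congruent r s"
    using assms by (auto simp: congruent_def doubleton_eq_iff)
  ultimately show ?thesis using assms unfolding mondrian_def by auto
qed

lemma L_shape_defect_eq_d3_formula: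
  assumes n: "3 \<le> n" and a: "a = (n + 1) div 3" and b: "b = (n - 1) div 2"
  shows "Max {a * n, (n - a) * b, (n - a) * (n - b)} - Min {a * n, (n - a) * b, (n - a) * (n - b)}
    = d3_formula n"
  using n
proof (cases rule: nat_ge_3_mod_6_cases)
  case (1 p)
  then have "a = 2 * p + 1" "b = 3 * p + 1" using a b by simp_all
  then show ?thesis unfolding 1 d3_formula_simps by (simp add: max_def min_def algebra_simps)
next
  case (2 p)
  then have "a = 2 * p + 1" "b = 3 * p + 1" using a b by simp_all
  then show ?thesis unfolding 2 d3_formula_simps by (simp add: max_def min_def algebra_simps)
next
  case (3 p)
  then have "a = 2 * p + 2" "b = 3 * p + 2" using a b by simp_all
  then show ?thesis unfolding 3 d3_formula_simps by (simp add: max_def min_def algebra_simps)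
next
  case (4 p)
  then have "a = 2 * p + 2" "b = 3 * p + 2" using a b by simp_all
  then show ?thesis unfolding 4 d3_formula_simps by (simp add: max_def min_def algebra_simps)
next
  case (5 p)
  then have "a = 2 * p + 2" "b = 3 * p + 3" using a b by simp_all
  then show ?thesis unfolding 5 d3_formula_simps by (simp add: max_def min_def algebra_simps)
next
  case (6 p)
  then have "a = 2 * p + 3" "b = 3 * p + 3" using a b by simp_all
  then show ?thesis unfolding 6 d3_formula_simps by (simp add: max_def min_def algebra_simps)
qed

lemma d3_formula_attained:
  assumes n: "3 \<le> n"
  shows "\<exists>P. mondrian n 3 P \<and> defect P = d3_formula n"
proof -
  define a where "a = (n + 1) div 3"
  define b where "b = (n - 1) div 2"
  define P where "P = {(0, 0, a, n), (a, 0, n - a, b), (a, b, n - a, n - b)}"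
  have "0 < a" "a < n" "0 < b" "b < n" "2 * b \<noteq> n" using n unfolding a_def b_def by auto
  then have "mondrian n 3 P" unfolding P_def by (rule mondrian_L_shape)
  moreover have "defect P = d3_formula n"
    using L_shape_defect_eq_d3_formula[OF n a_def b_def]
    unfolding defect_def P_def by (simp add: mult.commute)
  ultimately show ?thesis by blast
qed

theorem mainTheorem2:
  fixes n :: nat
  assumes "n \<ge> 3"
  shows "d 3 n =
    (if n mod 6 = 0 then n + n div 3
     else if n mod 6 = 1 then n - (n - 1) div 6
     else if n mod 6 = 2 then n + (n - 2) div 3
     else if n mod 6 = 3 then n - n div 3
     else if n mod 6 = 4 then n + (n + 2) div 3
     else n - (n + 1) div 6)"
proof -
  have "d 3 n = d3_formula n"
    unfolding d_def
  proof (rule Least_equality)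
    show "\<exists>P. mondrian n 3 P \<and> d3_formula n = defect P"
      using d3_formula_attained[OF assms] by metis
  next
    show "d3_formula n \<le> v" if "\<exists>P. mondrian n 3 P \<and> v = defect P" for v
      using that d3_formula_le_defect[OF _ assms] by blast
  qed
  then show ?thesis unfolding d3_formula_def .
qed

end
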